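(* Let $\vec{\nu}$ be a finite sequence of ordinals $<\varepsilon(\Lambda)$ and let $\xi\le\zeta<\varepsilon(\Lambda)$. If $\vec{\nu}<\xi$, then $\vec{\nu}<\zeta$.
   Context: $\Lambda$ is a fixed epsilon number and $\varepsilon(\Lambda)$ the least epsilon number above it. Every $0<\xi<\varepsilon(\Lambda)$ is uniquely $\xi=\Lambda^{\xi_m}a_m+\cdots+\Lambda^{\xi_0}a_0$ with $\xi_m>\cdots>\xi_0$, $0<a_i<\Lambda$; $te(\xi)=\xi_0$ (and $te(0)=0$). $\zeta\le_{pt}\xi$ ($\zeta$ is a part of $\xi$) iff $\zeta=\Lambda^{\xi_m}a_m+\cdots+\Lambda^{\xi_n}a_n$ for some $0\le n\le m+1$ (the empty sum being $0$). For a finite sequence $\vec\nu=(\nu_0,\dots,\nu_l)$ of ordinals $<\varepsilon(\Lambda)$ and $\xi<\varepsilon(\Lambda)$, $\vec\nu<\xi$ means: there exist $n$ with $0\le n\le l$ such that $\nu_i=0$ for all $n<i\le l$, and ordinals $\mu_0,\dots,\mu_n$ with $\mu_0\le_{pt}\xi$, $\mu_{i+1}\le_{pt}te(\mu_i)$ for all $i<n$, and $\nu_i<\mu_i$ for all $i\le n$. *)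

theory Defs
  imports Main
begin

text \<open>
  Ordinals below \<open>\<epsilon>(\<Lambda>)\<close> are represented by their (hereditary) base-\<open>\<Lambda>\<close>
  Cantor normal forms
  \<open>\<Lambda>^\<xi>\<^sub>m a\<^sub>m + ... + \<Lambda>^\<xi>\<^sub>0 a\<^sub>0\<close>, as the list
  \<open>[(\<xi>\<^sub>m, a\<^sub>m), ..., (\<xi>\<^sub>0, a\<^sub>0)]\<close> (leading term first).
  The coefficient type \<open>'a\<close> stands for the well-ordered set of nonzero
  ordinals below \<open>\<Lambda>\<close> (the interval (0,\<Lambda>)), with its ordinal order.
\<close>

datatype 'a onf = NF "('a onf \<times> 'a) list"

fun terms :: "'a onf \<Rightarrow> ('a onf \<times> 'a) list" where
  "terms (NF xs) = xs"

definition ozero :: "'a onf" where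
  "ozero = NF []"

fun olt :: "'a::wellorder onf \<Rightarrow> 'a onf \<Rightarrow> bool"
and olt_list :: "('a::wellorder onf \<times> 'a) list \<Rightarrow> ('a onf \<times> 'a) list \<Rightarrow> bool" where
  "olt (NF xs) (NF ys) = olt_list xs ys"
| "olt_list [] ys = (ys \<noteq> [])"
| "olt_list (x # xs) [] = False"
| "olt_list ((e, a) # xs) ((f, b) # ys) =
     (olt e f \<or> (e = f \<and> (a < b \<or> (a = b \<and> olt_list xs ys))))"

definition ole :: "'a::wellorder onf \<Rightarrow> 'a onf \<Rightarrow> bool" where
  "ole x y \<longleftrightarrow> olt x y \<or> x = y"

fun wf_onf :: "'a::wellorder onf \<Rightarrow> bool" where
  "wf_onf (NF xs) =
     ((\<forall>p \<in> set xs. wf_onf (fst p)) \<and>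
      (\<forall>i. Suc i < length xs \<longrightarrow> olt (fst (xs ! Suc i)) (fst (xs ! i))))"

definition te :: "'a onf \<Rightarrow> 'a onf" where
  "te x = (if terms x = [] then ozero else fst (last (terms x)))"

definition part :: "'a onf \<Rightarrow> 'a onf \<Rightarrow> bool" where
  "part z x \<longleftrightarrow> (\<exists>n \<le> length (terms x). z = NF (take n (terms x)))"

definition vec_less :: "'a::wellorder onf list \<Rightarrow> 'a onf \<Rightarrow> bool" where
  "vec_less nus xi \<longleftrightarrow>
     (\<exists>n < length nus.
        (\<forall>i. n < i \<and> i < length nus \<longrightarrow> nus ! i = ozero) \<and>
        (\<exists>mu :: nat \<Rightarrow> 'a onf.
           part (mu 0) xi \<and>
           (\<forall>i < n. part (mu (Suc i)) (te (mu i))) \<and>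
           (\<forall>i \<le> n. olt (nus ! i) (mu i))))"

end

theory Submission imports Defs begin

text \<open>
  If \<open>\<xi> < \<zeta>\<close>, every part \<open>\<mu>\<close> of \<open>\<xi>\<close> is dominated by a part \<open>\<mu>'\<close> of \<open>\<zeta>\<close>, in the sense
  \<open>\<mu> \<le> \<mu>'\<close> and \<open>te(\<mu>) \<le> te(\<mu>')\<close>: either \<open>\<mu>\<close> is already a part of \<open>\<zeta>\<close>, or \<open>\<mu>'\<close> is the
  initial segment of \<open>\<zeta>\<close> ending at the first term where \<open>\<zeta>\<close> exceeds \<open>\<xi>\<close>; as the
  exponents of \<open>\<xi>\<close> decrease, \<open>te(\<mu>)\<close> is at most the exponent of that term.
  Since \<open>te(\<mu>) \<le> te(\<mu>')\<close> is again a hypothesis of the same form, this can be iterated along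
  a witness chain \<open>\<mu>\<^sub>0, \<mu>\<^sub>1, ...\<close> for \<open>\<nu> < \<xi>\<close>, turning it into one for \<open>\<nu> < \<zeta>\<close>.
\<close>

text \<open>
  Transitivity of \<open>olt\<close> is assumed only for chains starting at an exponent of \<open>xs\<close>, which is what
  the structural induction over the nested datatype provides in \<open>olt_trans\<close>.
\<close>

lemma olt_list_trans:
  assumes "\<And>e f g. e \<in> fst ` set xs \<Longrightarrow> olt e f \<Longrightarrow> olt f g \<Longrightarrow> olt e g"
    and "olt_list xs ys" and "olt_list ys zs"
  shows "olt_list xs zs"
  using assms
proof (induction xs arbitrary: ys zs)
  case Nil
  then show ?case by (cases ys; cases zs) auto
next
  case (Cons p xs)
  obtain e a where p: "p = (e, a)" by force
  obtain f b ys' where ys: "ys = (f, b) # ys'"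
    using Cons.prems(2) by (cases ys) auto
  obtain g c zs' where zs: "zs = (g, c) # zs'"
    using Cons.prems(3) ys by (cases zs) auto
  have "olt e f \<Longrightarrow> olt f g \<Longrightarrow> olt e g" for f g
    using Cons.prems(1) p by auto
  moreover have "olt_list xs ys' \<Longrightarrow> olt_list ys' zs' \<Longrightarrow> olt_list xs zs'"
    using Cons.IH Cons.prems(1) by auto
  ultimately show ?case
    using Cons.prems(2,3) p ys zs by (auto dest: order.strict_trans)
qed

lemma olt_trans: "olt x y \<Longrightarrow> olt y z \<Longrightarrow> olt x z"
proof (induction x arbitrary: y z)
  case (NF xs)
  obtain ys where y: "y = NF ys" by (cases y)
  obtain zs where z: "z = NF zs" by (cases z)
  have "olt_list xs zs"
  proof (rule olt_list_trans[where ys = ys])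
    fix e f g assume "e \<in> fst ` set xs" "olt e f" "olt f g"
    then obtain p where "p \<in> set xs" "e \<in> Basic_BNFs.fsts p" by (force simp: fsts.simps)
    with NF.IH \<open>olt e f\<close> \<open>olt f g\<close> show "olt e g" by blast
  qed (use NF.prems y z in auto)
  then show ?case using z by simp
qed

lemma olt_ole_trans: "olt x y \<Longrightarrow> ole y z \<Longrightarrow> olt x z"
  unfolding ole_def using olt_trans by blast

lemma te_NF: "te (NF xs) = (if xs = [] then ozero else fst (last xs))"
  by (simp add: te_def)

lemma sorted_exponents_if_wf_onf:
  "wf_onf (NF xs) \<Longrightarrow> sorted_wrt (\<lambda>p q. olt (fst q) (fst p)) xs"
proof -
  have "transp (\<lambda>p q :: 'a::wellorder onf \<times> 'a. olt (fst q) (fst p))"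
    by (rule transpI) (use olt_trans in blast)
  then show "wf_onf (NF xs) \<Longrightarrow> ?thesis"
    by (simp add: sorted_wrt_iff_nth_Suc_transp)
qed

lemma te_NF_take_mem:
  assumes "take j xs \<noteq> []"
  shows "te (NF (take j xs)) \<in> fst ` set xs"
proof -
  have "last (take j xs) \<in> set xs" using assms by (meson in_set_takeD last_in_set)
  then show ?thesis using assms unfolding te_NF by simp
qed

lemma te_take_le_head_exponent:
  assumes "sorted_wrt (\<lambda>p q. olt (fst q) (fst p)) (p # xs)" and "0 < j"
  shows "ole (te (NF (take j (p # xs)))) (fst p)"
  using te_NF_take_mem[of j "p # xs"] assms by (auto simp: ole_def)

definition dominated :: "'a::wellorder onf \<Rightarrow> 'a onf \<Rightarrow> bool" where
  "dominated p q \<longleftrightarrow> ole p q \<and> ole (te p) (te q)"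

lemma dominated_refl: "dominated p p"
  by (simp add: dominated_def ole_def)

lemma dominated_NF_Cons:
  assumes "dominated (NF xs) (NF ys)" and "xs \<noteq> []"
  shows "dominated (NF (p # xs)) (NF (p # ys))"
proof -
  have "ys \<noteq> []"
    using assms by (cases xs) (auto simp: dominated_def ole_def)
  with assms show ?thesis
    by (cases p) (auto simp: dominated_def ole_def te_NF)
qed

lemma take_dominated_by_take:
  assumes "olt_list xs ys" and "sorted_wrt (\<lambda>p q. olt (fst q) (fst p)) xs"
  shows "\<exists>m \<le> length ys. dominated (NF (take j xs)) (NF (take m ys))"
  using assms
proof (induction xs arbitrary: ys j)
  case Nil
  then show ?case using dominated_refl by force
next
  case (Cons p xs)
  obtain e a where p: "p = (e, a)" by force
  obtain f b ys' where ys: "ys = (f, b) # ys'"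
    using Cons.prems(1) by (cases ys) auto
  show ?case
  proof (cases j)
    case 0
    then show ?thesis using dominated_refl by force
  next
    case (Suc j')
    consider "olt e f \<or> e = f \<and> a < b" | "p = (f, b)" "olt_list xs ys'"
      using Cons.prems(1) p ys by auto
    then show ?thesis
    proof cases
      case 1
      have "ole (te (NF (take j (p # xs)))) e"
        using te_take_le_head_exponent[OF Cons.prems(2), of j] Suc p by simp
      with 1 show ?thesis using p ys Suc
        by (intro exI[of _ 1]) (auto simp: dominated_def te_NF ole_def intro: olt_ole_trans)
    next
      case 2
      show ?thesis
      proof (cases "take j' xs = []")
        case True
        then have "take j (p # xs) = take 1 ys" using Suc 2(1) ys by simp
        then have "dominated (NF (take j (p # xs))) (NF (take 1 ys))"
          by (metis dominated_refl)
        then show ?thesis using ys by (intro exI[of _ 1]) simp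
      next
        case False
        obtain m where "m \<le> length ys'" "dominated (NF (take j' xs)) (NF (take m ys'))"
          using Cons.IH[OF 2(2)] Cons.prems(2) by auto
        with False show ?thesis using 2(1) ys Suc
          by (intro exI[of _ "Suc m"]) (simp add: dominated_NF_Cons)
      qed
    qed
  qed
qed

lemma part_dominated_by_part:
  assumes "wf_onf x" and "ole x z" and "part p x"
  shows "\<exists>q. part q z \<and> dominated p q"
proof (cases "x = z")
  case True
  then show ?thesis using assms(3) dominated_refl by blast
next
  case False
  obtain xs zs where xz: "x = NF xs" "z = NF zs" by (metis onf.exhaust)
  obtain j where "p = NF (take j xs)" using assms(3) xz by (auto simp: part_def)
  moreover have "olt_list xs zs" using assms(2) False xz by (simp add: ole_def)
  ultimately show ?thesis
    using take_dominated_by_take sorted_exponents_if_wf_onf assms(1) xz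
    unfolding part_def by fastforce
qed

lemma wf_onf_te_part:
  assumes "wf_onf x" and "part p x"
  shows "wf_onf (te p)"
proof -
  obtain xs where x: "x = NF xs" by (cases x)
  obtain j where p: "p = NF (take j xs)" using assms(2) x by (auto simp: part_def)
  show ?thesis
  proof (cases "take j xs = []")
    case True
    then show ?thesis using p by (simp add: te_NF ozero_def)
  next
    case False
    then show ?thesis using te_NF_take_mem assms(1) x p by fastforce
  qed
qed

fun parts_above :: "nat \<Rightarrow> (nat \<Rightarrow> 'a::wellorder onf) \<Rightarrow> 'a onf \<Rightarrow> bool" where
  "parts_above 0 g x \<longleftrightarrow> (\<exists>p. part p x \<and> olt (g 0) p)"
| "parts_above (Suc n) g x \<longleftrightarrow> (\<exists>p. part p x \<and> olt (g 0) p \<and> parts_above n (g \<circ> Suc) (te p))"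

lemma parts_above_iff_chain:
  "parts_above n g x \<longleftrightarrow>
     (\<exists>mu. part (mu 0) x \<and> (\<forall>i<n. part (mu (Suc i)) (te (mu i))) \<and> (\<forall>i\<le>n. olt (g i) (mu i)))"
proof (induction n arbitrary: g x)
  case 0
  then show ?case by auto
next
  case (Suc n)
  show ?case
  proof
    assume "parts_above (Suc n) g x"
    then obtain p mu where "part p x" "olt (g 0) p" "part (mu 0) (te p)"
      "\<forall>i<n. part (mu (Suc i)) (te (mu i))" "\<forall>i\<le>n. olt (g (Suc i)) (mu i)"
      using Suc.IH by auto
    then show "\<exists>mu. part (mu 0) x \<and> (\<forall>i<Suc n. part (mu (Suc i)) (te (mu i))) \<and>
                 (\<forall>i\<le>Suc n. olt (g i) (mu i))"
      by (intro exI[of _ "case_nat p mu"]) (auto simp: All_less_Suc2 split: nat.split)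
  next
    assume "\<exists>mu. part (mu 0) x \<and> (\<forall>i<Suc n. part (mu (Suc i)) (te (mu i))) \<and>
              (\<forall>i\<le>Suc n. olt (g i) (mu i))"
    then obtain mu where mu: "part (mu 0) x" "\<forall>i<Suc n. part (mu (Suc i)) (te (mu i))"
      "\<forall>i\<le>Suc n. olt (g i) (mu i)" by blast
    then have "parts_above n (g \<circ> Suc) (te (mu 0))"
      unfolding Suc.IH by (intro exI[of _ "mu \<circ> Suc"]) auto
    with mu show "parts_above (Suc n) g x" by auto
  qed
qed

lemma parts_above_mono:
  assumes "wf_onf x" and "wf_onf z" and "ole x z" and "parts_above n g x"
  shows "parts_above n g z"
  using assms
proof (induction n arbitrary: g x z)
  case 0
  then obtain p q where "olt (g 0) p" "part q z" "ole p q"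
    using part_dominated_by_part unfolding dominated_def by fastforce
  then show ?case using olt_ole_trans by auto
next
  case (Suc n)
  then obtain p q where p: "part p x" "olt (g 0) p" "parts_above n (g \<circ> Suc) (te p)"
    and q: "part q z" "ole p q" "ole (te p) (te q)"
    using part_dominated_by_part unfolding dominated_def by fastforce
  have "parts_above n (g \<circ> Suc) (te q)"
    using Suc.IH[OF _ _ q(3) p(3)] wf_onf_te_part Suc.prems(1,2) p(1) q(1) by blast
  then show ?case using p(2) q(1,2) olt_ole_trans by auto
qed

lemma vec_less_iff_parts_above:
  "vec_less nus xi \<longleftrightarrow>
     (\<exists>n < length nus. (\<forall>i. n < i \<and> i < length nus \<longrightarrow> nus ! i = ozero) \<and>
        parts_above n ((!) nus) xi)"
  by (simp add: vec_less_def parts_above_iff_chain)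

theorem proposition2p3:
  fixes nus :: "'a::wellorder onf list" and xi zeta :: "'a onf"
  assumes "nus \<noteq> []"
    and "\<forall>nu \<in> set nus. wf_onf nu"
    and "wf_onf xi" and "wf_onf zeta"
    and "ole xi zeta"
    and "vec_less nus xi"
  shows "vec_less nus zeta"
  using assms(6) parts_above_mono[OF assms(3-5)] by (auto simp: vec_less_iff_parts_above)

end
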